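(* Let $v\in\mathbb{R}^{n\times m}_+$ be nondegenerate and $B\in\mathbb{R}^n_{>0}$. Let $\mathcal{X}=\{x\in\mathbb{R}^{n\times m}_+:\sum_ix_{ij}=1\ \forall j\}$ and $A:\mathbb{R}^{n\times m}\to\mathbb{R}^n$, $Ax=(\langle v_1,x_1\rangle,\dots,\langle v_n,x_n\rangle)$, so $\|A\|=\max_i\|v_i\|_2$. Let $\underline u_i=\frac{B_i\|v_i\|_1}{\|B\|_1}$ and define $\tilde h(u)=\sum_i\tilde h_i(u_i)$ with $\tilde h_i(u_i)=-B_i\log u_i$ for $u_i>\underline u_i$ and $\tilde h_i(u_i)=\frac{B_i}{2\underline u_i^2}(u_i-\underline u_i)^2-\frac{B_i}{\underline u_i}(u_i-\underline u_i)-B_i\log\underline u_i$ for $u_i\le\underline u_i$. Let $\mu=\min_i\frac{B_i}{\|v_i\|_1^2}$, $L=\max_i\frac{B_i}{\underline u_i^2}$, $F(x)=\tilde h(Ax)$ and $F^*=\min_{x\in\mathcal{X}}F$. Then projected gradient $x^{t+1}=\Pi_{\mathcal{X}}(x^t-\frac{1}{L\|A\|^2}\nabla F(x^t))$ started at $x^0\in\mathcal{X}$ satisfies $$F(x^t)-F^*\le\left(1-\frac{\mu}{\max\{\mu,\,LH_{\mathcal{X}}(A)^2\|A\|^2\}}\right)^t(F(x^0)-F^* )\quad\forall t\ge0.$$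
   Context: $v_i$ is the $i$-th row of $v$; nondegenerate means no zero row or column. $x_i$ is the $i$-th row of $x$; $\mathcal{X}$ is viewed as a subset of $\mathbb{R}^{nm}$. $\Pi_{\mathcal{X}}$ is Euclidean projection. Hoffman constant: $H_{\mathcal{X}}(A)$ is the smallest $H>0$ such that for every $z$ with $\mathcal{X}\cap\{x:Ax=z\}\neq\emptyset$, setting $\mathcal{S}=\{x:Ax=z\}$, $\|x-\Pi_{\mathcal{X}\cap\mathcal{S}}(x)\|\le H\|Ax-z\|$ for all $x\in\mathcal{X}$. *)

theory Defs
  imports "HOL-Analysis.Analysis"
begin

text \<open>Matrices in R^{n x m} are elements of real^'m^'n; row i of x is x $ i.
  The Euclidean norm on real^'m^'n is the Frobenius norm, i.e. R^{n x m} viewed as R^{nm}.\<close>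

definition nondegenerate :: "real^'m^'n \<Rightarrow> bool" where
  "nondegenerate v \<longleftrightarrow> (\<forall>i j. v $ i $ j \<ge> 0)
     \<and> (\<forall>i. \<exists>j. v $ i $ j \<noteq> 0) \<and> (\<forall>j. \<exists>i. v $ i $ j \<noteq> 0)"

definition simplexes :: "(real^'m^'n) set" where
  "simplexes = {x. (\<forall>i j. x $ i $ j \<ge> 0) \<and> (\<forall>j. (\<Sum>i\<in>UNIV. x $ i $ j) = 1)}"

definition linA :: "real^'m^'n \<Rightarrow> real^'m^'n \<Rightarrow> real^'n" where
  "linA v x = (\<chi> i. v $ i \<bullet> x $ i)"

definition norm1 :: "real^'k \<Rightarrow> real" where
  "norm1 w = (\<Sum>j\<in>UNIV. \<bar>w $ j\<bar>)"

definition ulow :: "real^'m^'n \<Rightarrow> real^'n \<Rightarrow> 'n \<Rightarrow> real" where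
  "ulow v B i = B $ i * norm1 (v $ i) / norm1 B"

definition htil_i :: "real \<Rightarrow> real \<Rightarrow> real \<Rightarrow> real" where
  "htil_i b ul u = (if u > ul then - b * ln u
     else b / (2 * ul^2) * (u - ul)^2 - b / ul * (u - ul) - b * ln ul)"

definition htil :: "real^'m^'n \<Rightarrow> real^'n \<Rightarrow> real^'n \<Rightarrow> real" where
  "htil v B u = (\<Sum>i\<in>UNIV. htil_i (B $ i) (ulow v B i) (u $ i))"

definition Fobj :: "real^'m^'n \<Rightarrow> real^'n \<Rightarrow> real^'m^'n \<Rightarrow> real" where
  "Fobj v B x = htil v B (linA v x)"

definition muc :: "real^'m^'n \<Rightarrow> real^'n \<Rightarrow> real" where
  "muc v B = Min (range (\<lambda>i. B $ i / (norm1 (v $ i))^2))"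

definition Lc :: "real^'m^'n \<Rightarrow> real^'n \<Rightarrow> real" where
  "Lc v B = Max (range (\<lambda>i. B $ i / (ulow v B i)^2))"

definition grad :: "('a::euclidean_space \<Rightarrow> real) \<Rightarrow> 'a \<Rightarrow> 'a" where
  "grad f x = (SOME g. (f has_derivative (\<lambda>h. g \<bullet> h)) (at x))"

definition hoffman :: "'a::euclidean_space set \<Rightarrow> ('a \<Rightarrow> 'b::euclidean_space) \<Rightarrow> real" where
  "hoffman X A = Inf {H. H > 0 \<and> (\<forall>z. X \<inter> {x. A x = z} \<noteq> {} \<longrightarrow>
      (\<forall>x\<in>X. norm (x - closest_point (X \<inter> {x. A x = z}) x) \<le> H * norm (A x - z)))}"

end

theory Submission
  imports Defs
begin

text \<open>
  On the product of simplices each coordinate u_i = <v_i, x_i> ranges over [0, |v_i|_1], where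
  the barrier h_i has curvature between B_i / |v_i|_1^2 and B_i / ul_i^2. Hence F is L |A|^2-smooth,
  and F(y) \<ge> F(x) + <grad F(x), y - x> + mu/2 |A y - A x|^2 on the feasible set. Let z be the
  projection of x onto the optimal fibre {y feasible. A y = A x*}; the Hoffman bound
  |z - x| \<le> H |A z - A x| turns the lower model into quadratic growth, and comparing the projected
  gradient step with x + alpha (z - x), alpha = mu / max mu (L H^2 |A|^2), contracts F - F* by
  1 - alpha. The Hoffman constant of this polyhedron is finite because every linear map has
  preimages conformal to the given vector with norm bounded by a multiple of the image,
  proved by induction on the size of the support.
\<close>

section \<open>Conformal preimages of linear maps\<close>

definition coord_support :: "'a::euclidean_space \<Rightarrow> 'a set" where
  "coord_support x = {b\<in>Basis. x \<bullet> b \<noteq> 0}"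

definition conforms :: "'a::euclidean_space \<Rightarrow> 'a \<Rightarrow> bool" where
  "conforms y x \<longleftrightarrow> (\<forall>b\<in>Basis. min 0 (x \<bullet> b) \<le> y \<bullet> b \<and> y \<bullet> b \<le> max 0 (x \<bullet> b))"

lemma conforms_refl: "conforms x x"
  by (auto simp: conforms_def)

lemma between_zero_trans:
  fixes x y z :: real
  shows "min 0 y \<le> z \<Longrightarrow> z \<le> max 0 y \<Longrightarrow> min 0 x \<le> y \<Longrightarrow> y \<le> max 0 x \<Longrightarrow>
    min 0 x \<le> z \<and> z \<le> max 0 x"
  by (auto simp: min_def max_def split: if_splits)

lemma conforms_trans: "conforms z y \<Longrightarrow> conforms y x \<Longrightarrow> conforms z x"
  unfolding conforms_def using between_zero_trans by blast

lemma finite_coord_support [simp]: "finite (coord_support x)"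
  by (simp add: coord_support_def)

lemma between_zero_imp_mult_nonneg:
  fixes x y :: real
  shows "min 0 x \<le> y \<Longrightarrow> y \<le> max 0 x \<Longrightarrow> 0 \<le> x * y"
  by (cases "x \<ge> 0") (auto simp: zero_le_mult_iff)

lemma between_zero_convex_comb:
  fixes a x x1 x2 y1 y2 :: real
  assumes a: "0 \<le> a" "a \<le> 1"
    and y: "min 0 x1 \<le> y1" "y1 \<le> max 0 x1" "min 0 x2 \<le> y2" "y2 \<le> max 0 x2"
    and sign: "0 \<le> x * x1" "0 \<le> x * x2"
    and x: "x = a * x1 + (1 - a) * x2" "x = 0 \<Longrightarrow> x1 = 0 \<and> x2 = 0"
  shows "min 0 x \<le> a * y1 + (1 - a) * y2 \<and> a * y1 + (1 - a) * y2 \<le> max 0 x"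
proof (cases "0 < x")
  case True
  then have "0 \<le> y1" "y1 \<le> x1" "0 \<le> y2" "y2 \<le> x2"
    using sign y by (auto simp: zero_le_mult_iff)
  then have "0 \<le> a * y1" "a * y1 \<le> a * x1" "0 \<le> (1 - a) * y2" "(1 - a) * y2 \<le> (1 - a) * x2"
    using a by (auto intro: mult_left_mono)
  then show ?thesis using True x(1) by auto
next
  case False
  show ?thesis
  proof (cases "x < 0")
    case True
    then have "y1 \<le> 0" "x1 \<le> y1" "y2 \<le> 0" "x2 \<le> y2"
      using sign y by (auto simp: zero_le_mult_iff)
    then have "a * y1 \<le> 0" "a * x1 \<le> a * y1" "(1 - a) * y2 \<le> 0" "(1 - a) * x2 \<le> (1 - a) * y2"
      using a by (auto intro: mult_left_mono simp: mult_nonneg_nonpos)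
    then show ?thesis using True x(1) by auto
  next
    case False
    then show ?thesis using \<open>\<not> 0 < x\<close> x(2) y by auto
  qed
qed

lemma conforms_convex_comb:
  assumes "0 \<le> a" "a \<le> 1" "conforms y1 x1" "conforms y2 x2" "x = a *\<^sub>R x1 + (1 - a) *\<^sub>R x2"
    and "\<And>b. b \<in> Basis \<Longrightarrow> 0 \<le> (x \<bullet> b) * (x1 \<bullet> b) \<and> 0 \<le> (x \<bullet> b) * (x2 \<bullet> b)"
    and "\<And>b. b \<in> Basis \<Longrightarrow> x \<bullet> b = 0 \<Longrightarrow> x1 \<bullet> b = 0 \<and> x2 \<bullet> b = 0"
  shows "conforms (a *\<^sub>R y1 + (1 - a) *\<^sub>R y2) x"
  unfolding conforms_def
proof
  fix b :: 'a assume b: "b \<in> Basis"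
  have xb: "x \<bullet> b = a * (x1 \<bullet> b) + (1 - a) * (x2 \<bullet> b)"
    unfolding assms(5) by (simp only: inner_add_left inner_scaleR_left)
  have c: "min 0 (x1 \<bullet> b) \<le> y1 \<bullet> b" "y1 \<bullet> b \<le> max 0 (x1 \<bullet> b)"
    "min 0 (x2 \<bullet> b) \<le> y2 \<bullet> b" "y2 \<bullet> b \<le> max 0 (x2 \<bullet> b)"
    using assms(3,4) b unfolding conforms_def by auto
  have "(a *\<^sub>R y1 + (1 - a) *\<^sub>R y2) \<bullet> b = a * (y1 \<bullet> b) + (1 - a) * (y2 \<bullet> b)"
    by (simp only: inner_add_left inner_scaleR_left)
  then show "min 0 (x \<bullet> b) \<le> (a *\<^sub>R y1 + (1 - a) *\<^sub>R y2) \<bullet> b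
      \<and> (a *\<^sub>R y1 + (1 - a) *\<^sub>R y2) \<bullet> b \<le> max 0 (x \<bullet> b)"
    using between_zero_convex_comb[OF assms(1,2) c _ _ xb] assms(6,7)[OF b] by presburger
qed

lemma between_zero_diff_scaled:
  fixes a x y :: real
  assumes "0 < a" "0 < y * x" "a \<le> x / y"
  shows "min 0 x \<le> x - a * y \<and> x - a * y \<le> max 0 x"
proof -
  have "0 < x \<and> 0 < y \<or> x < 0 \<and> y < 0" using assms(2) by (auto simp: zero_less_mult_iff)
  then have "0 < a * y \<and> a * y \<le> x \<or> a * y < 0 \<and> x \<le> a * y"
    using assms(1,3) by (auto simp: pos_le_divide_eq neg_le_divide_eq mult_pos_neg)
  then show ?thesis by auto
qed

text \<open>The step a is the largest one that keeps every coordinate on which w and d agree in sign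
  between 0 and its value in d; at the minimizing coordinate d - a w vanishes.\<close>
lemma shrink_coord_support:
  fixes d w :: "'a::euclidean_space"
  assumes w: "coord_support w \<subseteq> coord_support d"
    and p0: "p0 \<in> Basis" "0 < (w \<bullet> p0) * (d \<bullet> p0)"
  obtains a where "0 < a" "card (coord_support (d - a *\<^sub>R w)) < card (coord_support d)"
    "\<And>b. b \<in> Basis \<Longrightarrow> 0 \<le> (w \<bullet> b) * (d \<bullet> b) \<Longrightarrow>
       min 0 (d \<bullet> b) \<le> (d - a *\<^sub>R w) \<bullet> b \<and> (d - a *\<^sub>R w) \<bullet> b \<le> max 0 (d \<bullet> b)"
    "\<And>b. b \<in> Basis \<Longrightarrow> 0 \<le> (d \<bullet> b) * ((d - a *\<^sub>R w) \<bullet> b)"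
proof -
  define P where "P = {b\<in>Basis. 0 < (w \<bullet> b) * (d \<bullet> b)}"
  define a where "a = Min ((\<lambda>b. (d \<bullet> b) / (w \<bullet> b)) ` P)"
  have "finite P" "P \<noteq> {}" using p0 by (auto simp: P_def)
  then have "a \<in> (\<lambda>b. (d \<bullet> b) / (w \<bullet> b)) ` P" unfolding a_def by (intro Min_in) auto
  then obtain p1 where p1: "p1 \<in> P" "a = (d \<bullet> p1) / (w \<bullet> p1)" by blast
  have a_le: "a \<le> (d \<bullet> b) / (w \<bullet> b)" if "b \<in> P" for b
    unfolding a_def using \<open>finite P\<close> that by simp
  have apos: "0 < a" using p1 by (auto simp: P_def zero_less_mult_iff zero_less_divide_iff)
  have w0: "w \<bullet> b = 0" if "b \<in> Basis" "d \<bullet> b = 0" for b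
    using w that unfolding coord_support_def by blast
  have "w \<bullet> p1 \<noteq> 0" using p1 by (auto simp: P_def)
  then have "(d - a *\<^sub>R w) \<bullet> p1 = 0" using p1(2) by (simp add: inner_diff_left)
  then have "coord_support (d - a *\<^sub>R w) \<subseteq> coord_support d - {p1}"
    using w0 by (auto simp: coord_support_def inner_diff_left)
  moreover have "p1 \<in> coord_support d" using p1 by (auto simp: P_def coord_support_def)
  ultimately have card: "card (coord_support (d - a *\<^sub>R w)) < card (coord_support d)"
    by (meson card_Diff1_less card_mono finite_coord_support finite_Diff order_le_less_trans)
  have between: "min 0 (d \<bullet> b) \<le> (d - a *\<^sub>R w) \<bullet> b \<and> (d - a *\<^sub>R w) \<bullet> b \<le> max 0 (d \<bullet> b)"
    if b: "b \<in> Basis" "0 \<le> (w \<bullet> b) * (d \<bullet> b)" for b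
  proof (cases "(w \<bullet> b) * (d \<bullet> b) = 0")
    case True
    then show ?thesis using w0[OF b(1)] by (auto simp: inner_diff_left)
  next
    case False
    then have "b \<in> P" using b by (simp add: P_def order.strict_iff_order)
    then show ?thesis
      using between_zero_diff_scaled[OF apos _ a_le] by (simp add: P_def inner_diff_left)
  qed
  have same_sign: "0 \<le> (d \<bullet> b) * ((d - a *\<^sub>R w) \<bullet> b)" if "b \<in> Basis" for b
  proof (cases "0 \<le> (w \<bullet> b) * (d \<bullet> b)")
    case True
    then show ?thesis using between that between_zero_imp_mult_nonneg by blast
  next
    case False
    then have "0 \<le> (d \<bullet> b) * (d \<bullet> b) - a * ((w \<bullet> b) * (d \<bullet> b))"
      using apos by (smt (verit) mult_pos_neg zero_le_square)
    then show ?thesis by (simp add: inner_diff_left algebra_simps)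
  qed
  show ?thesis using that apos card between same_sign by blast
qed

lemma conformal_preimage_convex_comb:
  fixes f :: "'a::euclidean_space \<Rightarrow> 'b::real_normed_vector"
  assumes lin: "linear f" and t: "0 \<le> t" "t \<le> 1" and d: "d = t *\<^sub>R d1 + (1 - t) *\<^sub>R d2"
    and sign: "\<And>b. b \<in> Basis \<Longrightarrow> 0 \<le> (d \<bullet> b) * (d1 \<bullet> b) \<and> 0 \<le> (d \<bullet> b) * (d2 \<bullet> b)"
    and zero: "\<And>b. b \<in> Basis \<Longrightarrow> d \<bullet> b = 0 \<Longrightarrow> d1 \<bullet> b = 0 \<and> d2 \<bullet> b = 0"
    and d1': "conforms d1' d1" "f d1' = f d" "norm d1' \<le> K * norm (f d)"
    and d2': "conforms d2' d2" "f d2' = f d" "norm d2' \<le> K * norm (f d)"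
  shows "\<exists>d'. conforms d' d \<and> f d' = f d \<and> norm d' \<le> K * norm (f d)"
proof (intro exI conjI)
  show "conforms (t *\<^sub>R d1' + (1 - t) *\<^sub>R d2') d"
    by (rule conforms_convex_comb[OF t d1'(1) d2'(1) d sign zero])
  show "f (t *\<^sub>R d1' + (1 - t) *\<^sub>R d2') = f d"
    using lin d1'(2) d2'(2) by (simp add: linear_add linear_scale scaleR_left_distrib[symmetric])
  have "norm (t *\<^sub>R d1' + (1 - t) *\<^sub>R d2') \<le> t * norm d1' + (1 - t) * norm d2'"
    using t by (metis abs_of_nonneg diff_ge_0_iff_ge norm_scaleR norm_triangle_ineq)
  also have "\<dots> \<le> K * norm (f d)" using t d1'(3) d2'(3) by (intro convex_bound_le) auto
  finally show "norm (t *\<^sub>R d1' + (1 - t) *\<^sub>R d2') \<le> K * norm (f d)" .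
qed

lemma conformal_preimage_step:
  fixes f :: "'a::euclidean_space \<Rightarrow> 'b::real_normed_vector"
  assumes lin: "linear f"
    and IH: "\<And>e. card (coord_support e) < card (coord_support d) \<Longrightarrow>
      \<exists>e'. conforms e' e \<and> f e' = f e \<and> norm e' \<le> K * norm (f e)"
    and w: "f w = 0" "coord_support w \<subseteq> coord_support d"
    and p0: "p0 \<in> Basis" "0 < (w \<bullet> p0) * (d \<bullet> p0)"
  shows "\<exists>d'. conforms d' d \<and> f d' = f d \<and> norm d' \<le> K * norm (f d)"
proof -
  have w0: "w \<bullet> b = 0" if "b \<in> Basis" "d \<bullet> b = 0" for b
    using w(2) that unfolding coord_support_def by blast
  obtain a where a: "0 < a" "card (coord_support (d - a *\<^sub>R w)) < card (coord_support d)"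
    "\<And>b. b \<in> Basis \<Longrightarrow> 0 \<le> (w \<bullet> b) * (d \<bullet> b) \<Longrightarrow>
       min 0 (d \<bullet> b) \<le> (d - a *\<^sub>R w) \<bullet> b \<and> (d - a *\<^sub>R w) \<bullet> b \<le> max 0 (d \<bullet> b)"
    "\<And>b. b \<in> Basis \<Longrightarrow> 0 \<le> (d \<bullet> b) * ((d - a *\<^sub>R w) \<bullet> b)"
    using shrink_coord_support[OF w(2) p0] by blast
  define d1 where "d1 = d - a *\<^sub>R w"
  have "f d1 = f d" using w(1) lin by (simp add: d1_def linear_diff linear_scale)
  then obtain d1' where d1': "conforms d1' d1" "f d1' = f d" "norm d1' \<le> K * norm (f d)"
    using IH[of d1] a(2) unfolding d1_def by auto
  show ?thesis
  proof (cases "\<forall>b\<in>Basis. 0 \<le> (w \<bullet> b) * (d \<bullet> b)")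
    case True
    then have "conforms d1 d" using a(3) by (simp add: conforms_def d1_def)
    then show ?thesis using d1' conforms_trans by blast
  next
    case False
    then obtain q where q: "q \<in> Basis" "0 < (- w \<bullet> q) * (d \<bullet> q)" by (auto simp: not_le)
    have "coord_support (- w) \<subseteq> coord_support d" using w(2) by (simp add: coord_support_def)
    then obtain c where c: "0 < c" "card (coord_support (d - c *\<^sub>R - w)) < card (coord_support d)"
      "\<And>b. b \<in> Basis \<Longrightarrow> 0 \<le> (d \<bullet> b) * ((d - c *\<^sub>R - w) \<bullet> b)"
      using shrink_coord_support[OF _ q] by metis
    define d2 where "d2 = d + c *\<^sub>R w"
    have d2_eq: "d - c *\<^sub>R - w = d2" by (simp add: d2_def)
    have "f d2 = f d" using w(1) lin by (simp add: d2_def linear_add linear_scale)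
    then obtain d2' where d2': "conforms d2' d2" "f d2' = f d" "norm d2' \<le> K * norm (f d)"
      using IH[of d2] c(2) unfolding d2_eq by auto
    define t where "t = c / (a + c)"
    have t: "0 \<le> t" "t \<le> 1" "1 - t = a / (a + c)" using a(1) c(1) by (auto simp: t_def field_simps)
    have "t *\<^sub>R d1 + (1 - t) *\<^sub>R d2 = (1 / (a + c)) *\<^sub>R ((c + a) *\<^sub>R d)"
      unfolding t(3) by (simp add: t_def d1_def d2_def algebra_simps divide_inverse)
    then have d_comb: "d = t *\<^sub>R d1 + (1 - t) *\<^sub>R d2" using a(1) c(1) by (simp add: add.commute)
    show ?thesis
      by (rule conformal_preimage_convex_comb[OF lin t(1,2) d_comb _ _ d1' d2'])
        (use a(4) c(3) w0 in \<open>auto simp: d1_def d2_eq[symmetric] inner_diff_left inner_add_left\<close>)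
  qed
qed

lemma support_injective_bound:
  fixes f :: "'a::euclidean_space \<Rightarrow> 'b::euclidean_space"
  assumes lin: "linear f"
  obtains K where
    "\<And>d. (\<And>w. f w = 0 \<Longrightarrow> coord_support w \<subseteq> coord_support d \<Longrightarrow> w = 0) \<Longrightarrow> norm d \<le> K * norm (f d)"
proof -
  have "\<exists>K. (\<forall>w. f w = 0 \<longrightarrow> coord_support w \<subseteq> S \<longrightarrow> w = 0) \<longrightarrow>
      (\<forall>d. coord_support d \<subseteq> S \<longrightarrow> norm d \<le> K * norm (f d))" for S :: "'a set"
  proof (cases "\<forall>w. f w = 0 \<longrightarrow> coord_support w \<subseteq> S \<longrightarrow> w = 0")
    case True
    have sub: "subspace {w. coord_support w \<subseteq> S}"
      unfolding subspace_def coord_support_def by (auto simp: subset_iff inner_add_left)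
    obtain e where "0 < e" "\<forall>d\<in>{w. coord_support w \<subseteq> S}. e * norm d \<le> norm (f d)"
      using injective_imp_isometric[OF closed_subspace[OF sub] sub linear_conv_bounded_linear[THEN iffD1, OF lin]] True
      by auto
    then show ?thesis by (intro exI[of _ "1 / e"]) (auto simp: field_simps)
  qed auto
  then obtain Kf where Kf: "\<And>S d. (\<forall>w. f w = 0 \<longrightarrow> coord_support w \<subseteq> S \<longrightarrow> w = 0) \<Longrightarrow>
      coord_support d \<subseteq> S \<Longrightarrow> norm d \<le> Kf S * norm (f d)"
    by metis
  define K where "K = Max (Kf ` Pow Basis)"
  show ?thesis
  proof
    fix d :: 'a
    assume "\<And>w. f w = 0 \<Longrightarrow> coord_support w \<subseteq> coord_support d \<Longrightarrow> w = 0"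
    then have "norm d \<le> Kf (coord_support d) * norm (f d)" by (intro Kf) auto
    also have "\<dots> \<le> K * norm (f d)"
      unfolding K_def by (intro mult_right_mono Max_ge) (auto simp: coord_support_def)
    finally show "norm d \<le> K * norm (f d)" .
  qed
qed

lemma conformal_preimage_bound:
  fixes f :: "'a::euclidean_space \<Rightarrow> 'b::euclidean_space"
  assumes lin: "linear f"
  obtains K where "\<And>d. \<exists>d'. conforms d' d \<and> f d' = f d \<and> norm d' \<le> K * norm (f d)"
proof -
  obtain K where K:
    "\<And>d. (\<And>w. f w = 0 \<Longrightarrow> coord_support w \<subseteq> coord_support d \<Longrightarrow> w = 0) \<Longrightarrow> norm d \<le> K * norm (f d)"
    using support_injective_bound[OF lin] by blast
  have "\<exists>d'. conforms d' d \<and> f d' = f d \<and> norm d' \<le> K * norm (f d)" if "card (coord_support d) = n" for n d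
    using that
  proof (induction n arbitrary: d rule: less_induct)
    case (less n d)
    have IH: "\<And>e. card (coord_support e) < card (coord_support d) \<Longrightarrow>
        \<exists>e'. conforms e' e \<and> f e' = f e \<and> norm e' \<le> K * norm (f e)"
      using less by blast
    show ?case
    proof (cases "\<forall>w. f w = 0 \<longrightarrow> coord_support w \<subseteq> coord_support d \<longrightarrow> w = 0")
      case True
      then show ?thesis using K[of d] conforms_refl by blast
    next
      case False
      then obtain w where w: "f w = 0" "coord_support w \<subseteq> coord_support d" "w \<noteq> 0" by blast
      then obtain p where p: "p \<in> Basis" "w \<bullet> p \<noteq> 0" by (metis euclidean_eq_iff inner_zero_left)
      then have "d \<bullet> p \<noteq> 0" using w(2) by (auto simp: coord_support_def)
      then consider "0 < (w \<bullet> p) * (d \<bullet> p)" | "0 < (- w \<bullet> p) * (d \<bullet> p)"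
        using p(2) by (cases "0 < (w \<bullet> p) * (d \<bullet> p)") (auto simp: not_less le_less mult_less_0_iff)
      then show ?thesis
      proof cases
        case 1
        then show ?thesis using conformal_preimage_step[OF lin IH w(1,2) p(1)] by blast
      next
        case 2
        have "f (- w) = 0" "coord_support (- w) \<subseteq> coord_support d"
          using w lin by (auto simp: linear_neg coord_support_def)
        then show ?thesis using conformal_preimage_step[OF lin IH _ _ p(1) 2] by blast
      qed
    qed
  qed
  then show ?thesis using that by blast
qed

section \<open>The one-dimensional barrier\<close>

lemma DERIV_piecewise_at:
  fixes f g q :: "real \<Rightarrow> real"
  assumes "DERIV g a :> D" "DERIV q a :> D" "\<And>u. a < u \<Longrightarrow> f u = g u"
    "\<And>u. u \<le> a \<Longrightarrow> f u = q u" "g a = q a"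
  shows "DERIV f a :> D"
proof -
  have fa: "f a = q a" "f a = g a" using assms(4,5) by auto
  have "((\<lambda>h. (q (a + h) - q a) / h) \<longlongrightarrow> D) (at_left 0)"
    using assms(2) unfolding DERIV_def filterlim_at_split by auto
  moreover have "eventually (\<lambda>h. (q (a + h) - q a) / h = (f (a + h) - f a) / h) (at_left 0)"
    unfolding eventually_at_filter by (rule always_eventually) (auto simp: fa(1) assms(4))
  ultimately have left: "((\<lambda>h. (f (a + h) - f a) / h) \<longlongrightarrow> D) (at_left 0)"
    by (rule Lim_transform_eventually)
  have "((\<lambda>h. (g (a + h) - g a) / h) \<longlongrightarrow> D) (at_right 0)"
    using assms(1) unfolding DERIV_def filterlim_at_split by auto
  moreover have "eventually (\<lambda>h. (g (a + h) - g a) / h = (f (a + h) - f a) / h) (at_right 0)"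
    unfolding eventually_at_filter by (rule always_eventually) (auto simp: fa(2) assms(3))
  ultimately have right: "((\<lambda>h. (f (a + h) - f a) / h) \<longlongrightarrow> D) (at_right 0)"
    by (rule Lim_transform_eventually)
  show ?thesis unfolding DERIV_def filterlim_at_split using left right by auto
qed

definition htil_i' :: "real \<Rightarrow> real \<Rightarrow> real \<Rightarrow> real" where
  "htil_i' b ul u = (if ul < u then - b / u else b / ul^2 * (u - ul) - b / ul)"

lemma has_real_derivative_htil_i:
  assumes ul: "0 < ul"
  shows "(htil_i b ul has_real_derivative htil_i' b ul u) (at u)"
proof -
  define g where "g u = - b * ln u" for u :: real
  define q where "q u = b / (2 * ul^2) * (u - ul)^2 - b / ul * (u - ul) - b * ln ul" for u :: real
  have dg: "(g has_real_derivative - b / u) (at u)" if "0 < u" for u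
    unfolding g_def using that by (auto intro!: derivative_eq_intros simp: field_simps)
  have dq: "(q has_real_derivative b / ul^2 * (u - ul) - b / ul) (at u)" for u
    unfolding q_def using ul by (auto intro!: derivative_eq_intros simp: field_simps power2_eq_square)
  have fg: "htil_i b ul u = g u" if "ul < u" for u using that by (simp add: htil_i_def g_def)
  have fq: "htil_i b ul u = q u" if "u \<le> ul" for u using that by (simp add: htil_i_def q_def)
  consider "ul < u" | "u < ul" | "u = ul" by linarith
  then show ?thesis
  proof cases
    case 1
    have "eventually (\<lambda>x. x \<in> {ul<..}) (nhds u)" using 1 by (intro eventually_nhds_in_open) auto
    then have "eventually (\<lambda>x. htil_i b ul x = g x) (nhds u)" by (rule eventually_mono) (auto simp: fg)
    then show ?thesis using 1 ul dg[of u] by (subst DERIV_cong_ev[OF refl]) (auto simp: htil_i'_def)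
  next
    case 2
    have "eventually (\<lambda>x. x \<in> {..<ul}) (nhds u)" using 2 by (intro eventually_nhds_in_open) auto
    then have "eventually (\<lambda>x. htil_i b ul x = q x) (nhds u)" by (rule eventually_mono) (auto simp: fq)
    then show ?thesis using 2 dq[of u] by (subst DERIV_cong_ev[OF refl]) (auto simp: htil_i'_def)
  next
    case 3
    have dq_ul: "(q has_real_derivative - b / ul) (at ul)" using dq[of ul] by simp
    have gq: "g ul = q ul" by (simp add: g_def q_def)
    have "(htil_i b ul has_real_derivative - b / ul) (at ul)"
      by (rule DERIV_piecewise_at[OF dg[OF ul] dq_ul fg fq gq])
    then show ?thesis using 3 by (simp add: htil_i'_def)
  qed
qed

lemma reciprocal_diff_bounds:
  fixes b lo hi x y :: real
  assumes "0 \<le> b" "0 < lo" "lo \<le> x" "x \<le> y" "y \<le> hi"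
  shows "b / hi^2 * (y - x) \<le> b / x - b / y" "b / x - b / y \<le> b / lo^2 * (y - x)"
proof -
  have eq: "b / x - b / y = b * (y - x) / (x * y)" using assms by (simp add: field_simps)
  have "lo^2 \<le> x * y" "x * y \<le> hi^2" "0 < x * y" using assms
    by (auto simp: power2_eq_square intro: mult_mono)
  moreover have "0 \<le> b * (y - x)" using assms by simp
  ultimately show "b / hi^2 * (y - x) \<le> b / x - b / y" "b / x - b / y \<le> b / lo^2 * (y - x)"
    unfolding eq using assms by (auto intro: divide_left_mono simp: power2_eq_square)
qed

lemma htil_i'_increment_le:
  assumes "0 \<le> b" "0 < ul" "t \<le> s"
  shows "htil_i' b ul s - htil_i' b ul t \<le> b / ul^2 * (s - t)"
proof -
  consider "ul < t" | "s \<le> ul" | "t \<le> ul" "ul < s" using assms by linarith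
  then show ?thesis
  proof cases
    case 1
    then show ?thesis using reciprocal_diff_bounds(2)[of b ul t s s] assms by (simp add: htil_i'_def)
  next
    case 2
    then show ?thesis using assms by (simp add: htil_i'_def right_diff_distrib)
  next
    case 3
    have "htil_i' b ul s - htil_i' b ul t = (b / ul - b / s) + b / ul^2 * (ul - t)"
      using 3 assms by (simp add: htil_i'_def field_simps)
    also have "\<dots> \<le> b / ul^2 * (s - ul) + b / ul^2 * (ul - t)"
      using reciprocal_diff_bounds(2)[of b ul ul s s] 3 assms by simp
    also have "\<dots> = b / ul^2 * ((s - ul) + (ul - t))" by (rule distrib_left[symmetric])
    finally show ?thesis by simp
  qed
qed

lemma htil_i'_increment_ge:
  assumes "0 \<le> b" "0 < ul" "ul \<le> V" "t \<le> s" "s \<le> V"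
  shows "b / V^2 * (s - t) \<le> htil_i' b ul s - htil_i' b ul t"
proof -
  have slope: "b / V^2 \<le> b / ul^2" using assms by (intro divide_left_mono power_mono) auto
  consider "ul < t" | "s \<le> ul" | "t \<le> ul" "ul < s" using assms by linarith
  then show ?thesis
  proof cases
    case 1
    then show ?thesis using reciprocal_diff_bounds(1)[of b t t s V] assms by (simp add: htil_i'_def)
  next
    case 2
    then have "htil_i' b ul s - htil_i' b ul t = b / ul^2 * (s - t)"
      using assms by (simp add: htil_i'_def right_diff_distrib)
    moreover have "b / V^2 * (s - t) \<le> b / ul^2 * (s - t)" using slope assms by (intro mult_right_mono) auto
    ultimately show ?thesis by simp
  next
    case 3
    have "b / V^2 * (s - ul) \<le> b / ul - b / s"
      using reciprocal_diff_bounds(1)[of b ul ul s V] 3 assms by simp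
    moreover have "b / V^2 * (ul - t) \<le> b / ul^2 * (ul - t)" using slope 3 by (intro mult_right_mono) auto
    moreover have "htil_i' b ul s - htil_i' b ul t = (b / ul - b / s) + b / ul^2 * (ul - t)"
      using 3 assms by (simp add: htil_i'_def field_simps)
    moreover have "b / V^2 * (s - ul) + b / V^2 * (ul - t) = b / V^2 * (s - t)"
      unfolding distrib_left[symmetric] by simp
    ultimately show ?thesis by linarith
  qed
qed

lemma quadratic_upper_bound_from_deriv:
  fixes f f' :: "real \<Rightarrow> real"
  assumes deriv: "\<And>x. lo \<le> x \<Longrightarrow> x \<le> hi \<Longrightarrow> (f has_real_derivative f' x) (at x)"
    and incr: "\<And>x y. lo \<le> x \<Longrightarrow> x \<le> y \<Longrightarrow> y \<le> hi \<Longrightarrow> f' y - f' x \<le> K * (y - x)"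
    and st: "lo \<le> s" "s \<le> hi" "lo \<le> t" "t \<le> hi"
  shows "f s \<le> f t + f' t * (s - t) + K / 2 * (s - t)^2"
proof -
  define psi where "psi x = f x - f t - f' t * (x - t) - K / 2 * (x - t)^2" for x
  have dpsi: "(psi has_real_derivative f' x - f' t - K * (x - t)) (at x)" if "lo \<le> x" "x \<le> hi" for x
    unfolding psi_def
    by (auto intro!: derivative_eq_intros deriv[OF that] simp: power2_eq_square algebra_simps)
  have "psi s \<le> psi t"
  proof (cases "t \<le> s")
    case True
    show ?thesis
    proof (rule DERIV_nonpos_imp_nonincreasing[of t s psi, OF True])
      fix x assume "t \<le> x" "x \<le> s"
      then show "\<exists>y. DERIV psi x :> y \<and> y \<le> 0"
        using dpsi incr[of t x] st by (intro exI[of _ "f' x - f' t - K * (x - t)"] conjI) auto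
    qed
  next
    case False
    show ?thesis
    proof (rule DERIV_nonneg_imp_nondecreasing[of s t psi])
      show "s \<le> t" using False by simp
      fix x assume x: "s \<le> x" "x \<le> t"
      have "0 \<le> f' x - f' t - K * (x - t)" using incr[of x t] x st by (simp add: algebra_simps)
      then show "\<exists>y. DERIV psi x :> y \<and> 0 \<le> y" using dpsi[of x] x st by auto
    qed
  qed
  then show ?thesis by (simp add: psi_def)
qed

lemma quadratic_lower_bound_from_deriv:
  fixes f f' :: "real \<Rightarrow> real"
  assumes deriv: "\<And>x. lo \<le> x \<Longrightarrow> x \<le> hi \<Longrightarrow> (f has_real_derivative f' x) (at x)"
    and incr: "\<And>x y. lo \<le> x \<Longrightarrow> x \<le> y \<Longrightarrow> y \<le> hi \<Longrightarrow> m * (y - x) \<le> f' y - f' x"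
    and st: "lo \<le> s" "s \<le> hi" "lo \<le> t" "t \<le> hi"
  shows "f t + f' t * (s - t) + m / 2 * (s - t)^2 \<le> f s"
proof -
  have "- f s \<le> - f t + - f' t * (s - t) + - m / 2 * (s - t)^2"
  proof (rule quadratic_upper_bound_from_deriv[OF _ _ st])
    show "((\<lambda>x. - f x) has_real_derivative - f' x) (at x)" if "lo \<le> x" "x \<le> hi" for x
      using deriv[OF that] by (rule DERIV_minus)
    show "- f' y - - f' x \<le> - m * (y - x)" if "lo \<le> x" "x \<le> y" "y \<le> hi" for x y
      using incr[OF that] by simp
  qed
  then show ?thesis by simp
qed

lemma htil_i_le_quadratic:
  assumes "0 \<le> b" "0 < ul"
  shows "htil_i b ul s \<le> htil_i b ul t + htil_i' b ul t * (s - t) + b / ul^2 / 2 * (s - t)^2"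
  by (rule quadratic_upper_bound_from_deriv[of "min s t" "max s t"])
    (use has_real_derivative_htil_i htil_i'_increment_le assms in auto)

lemma htil_i_ge_quadratic:
  assumes "0 \<le> b" "0 < ul" "ul \<le> V" "s \<le> V" "t \<le> V" "m \<le> b / V^2"
  shows "htil_i b ul t + htil_i' b ul t * (s - t) + m / 2 * (s - t)^2 \<le> htil_i b ul s"
proof (rule quadratic_lower_bound_from_deriv[of "min s t" V])
  fix x y assume "min s t \<le> x" "x \<le> y" "y \<le> V"
  then show "m * (y - x) \<le> htil_i' b ul y - htil_i' b ul x"
    using htil_i'_increment_ge[of b ul V x y] assms mult_right_mono[of m "b / V^2" "y - x"] by auto
qed (use has_real_derivative_htil_i assms in auto)

section \<open>Linear convergence of a projected gradient step\<close>

lemma closest_point_minimizes_quadratic_model: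
  fixes x y g :: "'a::euclidean_space"
  assumes X: "convex X" "closed X" "X \<noteq> {}" and LF: "0 < LF" and y: "y \<in> X"
  defines "p \<equiv> closest_point X (x - (1 / LF) *\<^sub>R g)"
  shows "g \<bullet> (p - x) + LF / 2 * (norm (p - x))^2 \<le> g \<bullet> (y - x) + LF / 2 * (norm (y - x))^2"
proof -
  define a where "a = x - (1 / LF) *\<^sub>R g"
  have "p \<in> X" unfolding p_def by (rule closest_point_in_set[OF X(2,3)])
  then have "(a - p) \<bullet> (y - p) \<le> 0"
    using any_closest_point_dot[OF X(1,2) _ y] closest_point_exists(2)[OF X(2,3)] by (simp add: p_def a_def)
  then have "(x - p) \<bullet> (y - p) - (g \<bullet> (y - p)) / LF \<le> 0"
    by (simp add: a_def inner_diff_left)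
  then have "- LF * ((p - x) \<bullet> (y - p)) \<le> g \<bullet> (y - p)"
    using LF by (simp add: field_simps inner_diff_left)
  moreover have "0 \<le> LF / 2 * (norm (y - p))^2" using LF by simp
  moreover have sq: "(norm (y - x))^2 = (norm (y - p))^2 + 2 * ((y - p) \<bullet> (p - x)) + (norm (p - x))^2"
    using dot_norm[of "y - p" "p - x"] by simp
  have "g \<bullet> (y - x) + LF / 2 * (norm (y - x))^2 - (g \<bullet> (p - x) + LF / 2 * (norm (p - x))^2)
      = g \<bullet> (y - p) + LF * ((p - x) \<bullet> (y - p)) + LF / 2 * (norm (y - p))^2"
    unfolding sq by (simp add: inner_diff_right inner_commute algebra_simps)
  ultimately show ?thesis by linarith
qed

lemma projected_gradient_contraction:
  fixes F :: "'a::euclidean_space \<Rightarrow> real" and A :: "'a \<Rightarrow> 'b::real_normed_vector"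
  assumes X: "convex X" "closed X" "X \<noteq> {}" and x: "x \<in> X" and LF: "0 < LF" and mu: "0 < mu"
    and upper: "\<And>y. F y \<le> F x + g \<bullet> (y - x) + LF / 2 * (norm (y - x))^2"
    and lower: "\<And>y. y \<in> X \<Longrightarrow> F x + g \<bullet> (y - x) + mu / 2 * (norm (A y - A x))^2 \<le> F y"
    and z: "z \<in> X" "norm (z - x) \<le> H * norm (A z - A x)"
  shows "F (closest_point X (x - (1 / LF) *\<^sub>R g)) - F z \<le> (1 - mu / max mu (LF * H^2)) * (F x - F z)"
proof -
  define xp where "xp = closest_point X (x - (1 / LF) *\<^sub>R g)"
  define al where "al = mu / max mu (LF * H^2)"
  define R where "R = norm (A z - A x)"
  have al: "0 < al" "al \<le> 1" using mu by (auto simp: al_def)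
  have "al * (LF * H^2) = mu * (LF * H^2 / max mu (LF * H^2))" by (simp add: al_def)
  also have "\<dots> \<le> mu" using mu by (simp add: mult_left_le divide_le_eq)
  finally have al_LF: "al * (LF * H^2) \<le> mu" .
  have dist_z: "(norm (z - x))^2 \<le> H^2 * R^2"
    using z(2) by (metis R_def norm_ge_zero power_mono power_mult_distrib)
  \<comment> \<open>compare the step with the point y on the segment from x towards z\<close>
  define y where "y = x + al *\<^sub>R (z - x)"
  have "y = (1 - al) *\<^sub>R x + al *\<^sub>R z" by (simp add: y_def algebra_simps)
  then have "y \<in> X" using X(1) x z(1) al by (simp add: convex_def)
  have "F xp \<le> F x + g \<bullet> (xp - x) + LF / 2 * (norm (xp - x))^2" by (rule upper)
  also have "\<dots> \<le> F x + g \<bullet> (y - x) + LF / 2 * (norm (y - x))^2"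
    using closest_point_minimizes_quadratic_model[OF X LF \<open>y \<in> X\<close>] by (simp add: xp_def)
  also have "\<dots> = F x + al * (g \<bullet> (z - x)) + LF / 2 * al^2 * (norm (z - x))^2"
    using al by (simp add: y_def power_mult_distrib)
  also have "\<dots> \<le> F x + al * (F z - F x - mu / 2 * R^2) + LF / 2 * al^2 * (H^2 * R^2)"
    using lower[OF z(1)] dist_z al LF by (intro add_mono mult_left_mono) (auto simp: R_def)
  also have "\<dots> \<le> F x + al * (F z - F x)"
  proof -
    have "al * (al * (LF * H^2) * R^2) \<le> al * (mu * R^2)"
      using al_LF al by (intro mult_left_mono mult_right_mono) auto
    then show ?thesis by (simp add: algebra_simps power2_eq_square)
  qed
  finally have "F xp - F z \<le> (1 - al) * (F x - F z)" by (simp add: algebra_simps)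
  then show ?thesis by (simp add: xp_def al_def)
qed

section \<open>The objective on the product of simplices\<close>

lemma abs_nth_le_norm1: "\<bar>w $ i\<bar> \<le> norm1 w"
  unfolding norm1_def by (rule member_le_sum) auto

lemma norm1_row_pos:
  assumes "nondegenerate v"
  shows "0 < norm1 (v $ i)"
proof -
  obtain j where "v $ i $ j \<noteq> 0" using assms unfolding nondegenerate_def by blast
  then show ?thesis using abs_nth_le_norm1[of "v $ i" j] by linarith
qed

lemma ulow_pos:
  assumes "nondegenerate v" "\<forall>i. 0 < B $ i"
  shows "0 < ulow v B i"
proof -
  have "0 < norm1 B" using abs_nth_le_norm1[of B i] assms(2) by (smt (verit))
  then show ?thesis using norm1_row_pos[OF assms(1), of i] assms(2) by (simp add: ulow_def)
qed

lemma ulow_le_norm1: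
  assumes "nondegenerate v" "\<forall>i. 0 < B $ i"
  shows "ulow v B i \<le> norm1 (v $ i)"
proof -
  have "0 < B $ i" "B $ i \<le> norm1 B" using abs_nth_le_norm1[of B i] assms(2) by auto
  then have "B $ i / norm1 B \<le> 1" by simp
  then show ?thesis
    using norm1_row_pos[OF assms(1), of i] mult_right_mono[of "B $ i / norm1 B" 1 "norm1 (v $ i)"]
    by (simp add: ulow_def)
qed

lemma Lc_ge: "B $ i / (ulow v B i)^2 \<le> Lc v B"
  unfolding Lc_def by (rule Max_ge) auto

lemma muc_le: "muc v B \<le> B $ i / (norm1 (v $ i))^2"
  unfolding muc_def by (rule Min_le) auto

lemma muc_pos:
  assumes "nondegenerate v" "\<forall>i. 0 < B $ i"
  shows "0 < muc v B"
proof -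
  have "muc v B \<in> range (\<lambda>i. B $ i / (norm1 (v $ i))^2)" unfolding muc_def by (rule Min_in) auto
  then obtain i where "muc v B = B $ i / (norm1 (v $ i))^2" by blast
  then show ?thesis using assms(2) norm1_row_pos[OF assms(1), of i] by simp
qed

lemma Lc_pos:
  assumes "nondegenerate v" "\<forall>i. 0 < B $ i"
  shows "0 < Lc v B"
proof -
  have "0 < B $ i / (ulow v B i)^2" for i using ulow_pos[OF assms, of i] assms(2) by simp
  then show ?thesis using Lc_ge[of B undefined v] by (meson less_le_trans)
qed

lemma linear_linA: "linear (linA v)"
  by (rule linearI) (auto simp: linA_def vec_eq_iff inner_add_right)

lemma linA_diff: "linA v (x - y) = linA v x - linA v y"
  by (simp add: linA_def vec_eq_iff inner_diff_right)

lemma onorm_linA_pos: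
  assumes "nondegenerate v"
  shows "0 < onorm (linA v)"
proof -
  have "v $ i \<noteq> 0" for i using norm1_row_pos[OF assms, of i] by (auto simp: norm1_def)
  then have "linA v v \<noteq> 0" by (auto simp: linA_def vec_eq_iff)
  then show ?thesis using onorm_pos_lt linear_linA linear_conv_bounded_linear by blast
qed

lemma simplexes_entry_bounds:
  assumes "x \<in> simplexes"
  shows "0 \<le> x $ i $ j" "x $ i $ j \<le> 1"
proof -
  show "0 \<le> x $ i $ j" using assms by (simp add: simplexes_def)
  have "x $ i $ j \<le> (\<Sum>k\<in>UNIV. x $ k $ j)" using assms by (intro member_le_sum) (auto simp: simplexes_def)
  then show "x $ i $ j \<le> 1" using assms by (simp add: simplexes_def)
qed

lemma linA_simplexes_bounds:
  assumes "nondegenerate v" "x \<in> simplexes"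
  shows "0 \<le> linA v x $ i" "linA v x $ i \<le> norm1 (v $ i)"
proof -
  have v: "0 \<le> v $ i $ j" for j using assms(1) by (simp add: nondegenerate_def)
  have eq: "linA v x $ i = (\<Sum>j\<in>UNIV. v $ i $ j * x $ i $ j)" by (simp add: linA_def inner_vec_def)
  show "0 \<le> linA v x $ i" unfolding eq using v simplexes_entry_bounds(1)[OF assms(2)] by (simp add: sum_nonneg)
  have "(\<Sum>j\<in>UNIV. v $ i $ j * x $ i $ j) \<le> (\<Sum>j\<in>UNIV. v $ i $ j)"
    using v simplexes_entry_bounds[OF assms(2)] by (intro sum_mono) (simp add: mult_left_le)
  then show "linA v x $ i \<le> norm1 (v $ i)" unfolding eq using v by (simp add: norm1_def)
qed

lemma simplexes_nonempty: "simplexes \<noteq> {}"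
proof -
  have "(\<chi> i j. if i = undefined then 1 else 0) \<in> simplexes" by (simp add: simplexes_def)
  then show ?thesis by blast
qed

lemma convex_simplexes: "convex simplexes"
  unfolding convex_def simplexes_def by (auto simp: sum.distrib sum_distrib_left[symmetric])

lemma closed_simplexes: "closed simplexes"
proof -
  have "simplexes = (\<Inter>i. \<Inter>j. {x. 0 \<le> x $ i $ j}) \<inter> (\<Inter>j. {x. (\<Sum>i\<in>UNIV. x $ i $ j) = 1})"
    by (auto simp: simplexes_def)
  also have "closed \<dots>"
    by (intro closed_Int closed_INT ballI closed_Collect_le closed_Collect_eq continuous_intros)
  finally show ?thesis .
qed

lemma compact_simplexes: "compact simplexes"
proof -
  have "norm x \<le> real CARD('n) * real CARD('m)" if "x \<in> simplexes" for x :: "real^'m^'n"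
  proof -
    have "norm x \<le> (\<Sum>i\<in>UNIV. norm (x $ i))" unfolding norm_vec_def by (rule L2_set_le_sum) simp
    also have "\<dots> \<le> (\<Sum>i\<in>UNIV. \<Sum>j\<in>UNIV. \<bar>x $ i $ j\<bar>)" by (intro sum_mono norm_le_l1_cart)
    also have "\<dots> \<le> (\<Sum>i\<in>(UNIV::'n set). \<Sum>j\<in>(UNIV::'m set). 1)"
      using simplexes_entry_bounds[OF that] by (intro sum_mono) auto
    finally show ?thesis by simp
  qed
  then have "bounded (simplexes :: (real^'m^'n) set)" unfolding bounded_iff by blast
  then show ?thesis using closed_simplexes compact_eq_bounded_closed by blast
qed

lemma grad_eqI:
  assumes "(f has_derivative (\<lambda>h. g \<bullet> h)) (at x)"
  shows "grad f x = g"
proof -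
  have "(f has_derivative (\<lambda>h. grad f x \<bullet> h)) (at x)"
    unfolding grad_def by (rule someI[of _ g]) (rule assms)
  then have "(\<lambda>h. grad f x \<bullet> h) = (\<lambda>h. g \<bullet> h)" using assms by (rule has_derivative_unique)
  then have "(grad f x - g) \<bullet> (grad f x - g) = 0" by (metis inner_diff_left right_minus_eq)
  then show ?thesis by simp
qed

definition gradF :: "real^'m^'n \<Rightarrow> real^'n \<Rightarrow> real^'m^'n \<Rightarrow> real^'m^'n" where
  "gradF v B x = (\<chi> i. htil_i' (B $ i) (ulow v B i) (linA v x $ i) *\<^sub>R v $ i)"

lemma Fobj_eq_sum: "Fobj v B x = (\<Sum>i\<in>UNIV. htil_i (B $ i) (ulow v B i) (v $ i \<bullet> x $ i))"
  by (simp add: Fobj_def htil_def linA_def)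

lemma inner_gradF: "gradF v B x \<bullet> h = (\<Sum>i\<in>UNIV. htil_i' (B $ i) (ulow v B i) (linA v x $ i) * linA v h $ i)"
  by (simp add: gradF_def linA_def inner_vec_def sum_distrib_left mult.assoc)

lemma Fobj_has_derivative:
  assumes "nondegenerate v" "\<forall>i. 0 < B $ i"
  shows "(Fobj v B has_derivative (\<lambda>h. gradF v B x \<bullet> h)) (at x)"
proof -
  have "((\<lambda>x. htil_i (B $ i) (ulow v B i) (v $ i \<bullet> x $ i)) has_derivative
      (\<lambda>h. (v $ i \<bullet> h $ i) * htil_i' (B $ i) (ulow v B i) (v $ i \<bullet> x $ i))) (at x)" for i
  proof (rule DERIV_compose_FDERIV[where g = "\<lambda>x. v $ i \<bullet> x $ i"])
    show "(htil_i (B $ i) (ulow v B i) has_real_derivative htil_i' (B $ i) (ulow v B i) (v $ i \<bullet> x $ i))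
        (at (v $ i \<bullet> x $ i))"
      using has_real_derivative_htil_i ulow_pos[OF assms] by blast
    have "bounded_linear (\<lambda>x. v $ i \<bullet> x $ i)"
      by (rule bounded_linear_compose[OF bounded_linear_inner_right bounded_linear_vec_nth])
    then show "((\<lambda>x. v $ i \<bullet> x $ i) has_derivative (\<lambda>x. v $ i \<bullet> x $ i)) (at x)"
      by (rule bounded_linear_imp_has_derivative)
  qed
  then have "((\<lambda>x. \<Sum>i\<in>UNIV. htil_i (B $ i) (ulow v B i) (v $ i \<bullet> x $ i)) has_derivative
      (\<lambda>h. \<Sum>i\<in>UNIV. (v $ i \<bullet> h $ i) * htil_i' (B $ i) (ulow v B i) (v $ i \<bullet> x $ i))) (at x)"
    by (rule has_derivative_sum)
  then show ?thesis unfolding Fobj_eq_sum[abs_def]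
    by (rule has_derivative_eq_rhs) (auto simp: inner_gradF linA_def mult.commute)
qed

lemma norm_power2_vec: "(norm (z :: real^'n))^2 = (\<Sum>i\<in>UNIV. (z $ i)^2)"
  unfolding power2_norm_eq_inner by (simp add: inner_vec_def power2_eq_square)

lemma Fobj_le_quadratic_model:
  assumes nd: "nondegenerate v" and B: "\<forall>i. 0 < B $ i"
  shows "Fobj v B y \<le> Fobj v B x + gradF v B x \<bullet> (y - x)
    + Lc v B / 2 * (onorm (linA v))^2 * (norm (y - x))^2"
proof -
  let ?u = "linA v x" and ?u' = "linA v y" and ?h = "\<lambda>i. htil_i (B $ i) (ulow v B i)"
    and ?h' = "\<lambda>i. htil_i' (B $ i) (ulow v B i)"
  have "?h i (?u' $ i) \<le> ?h i (?u $ i) + ?h' i (?u $ i) * (?u' $ i - ?u $ i)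
      + Lc v B / 2 * (?u' $ i - ?u $ i)^2" for i
  proof -
    have "B $ i / (ulow v B i)^2 / 2 * (?u' $ i - ?u $ i)^2 \<le> Lc v B / 2 * (?u' $ i - ?u $ i)^2"
      using Lc_ge[of B i v] by (intro mult_right_mono) auto
    moreover have "?h i (?u' $ i) \<le> ?h i (?u $ i) + ?h' i (?u $ i) * (?u' $ i - ?u $ i)
        + B $ i / (ulow v B i)^2 / 2 * (?u' $ i - ?u $ i)^2"
      by (rule htil_i_le_quadratic) (use B ulow_pos[OF nd B] in \<open>auto simp: less_imp_le\<close>)
    ultimately show ?thesis by linarith
  qed
  then have "Fobj v B y \<le> Fobj v B x + gradF v B x \<bullet> (y - x) + Lc v B / 2 * (norm (?u' - ?u))^2"
    by (simp add: Fobj_def htil_def inner_gradF linA_def inner_diff_right norm_power2_vec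
        sum_distrib_left flip: sum.distrib sum_subtractf right_diff_distrib) (rule sum_mono)
  also have "\<dots> \<le> Fobj v B x + gradF v B x \<bullet> (y - x) + Lc v B / 2 * (onorm (linA v) * norm (y - x))^2"
    using Lc_pos[OF nd B] onorm[OF linear_linA[THEN linear_conv_bounded_linear[THEN iffD1]], of v "y - x"]
    by (intro add_left_mono mult_left_mono power_mono) (auto simp: linA_diff)
  finally show ?thesis by (simp add: power_mult_distrib)
qed

lemma Fobj_ge_quadratic_model:
  assumes nd: "nondegenerate v" and B: "\<forall>i. 0 < B $ i" and xy: "x \<in> simplexes" "y \<in> simplexes"
  shows "Fobj v B x + gradF v B x \<bullet> (y - x) + muc v B / 2 * (norm (linA v y - linA v x))^2 \<le> Fobj v B y"
proof -
  let ?u = "linA v x" and ?u' = "linA v y" and ?h = "\<lambda>i. htil_i (B $ i) (ulow v B i)"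
    and ?h' = "\<lambda>i. htil_i' (B $ i) (ulow v B i)"
  have "?h i (?u $ i) + ?h' i (?u $ i) * (?u' $ i - ?u $ i) + muc v B / 2 * (?u' $ i - ?u $ i)^2
      \<le> ?h i (?u' $ i)" for i
    using htil_i_ge_quadratic[of "B $ i" "ulow v B i" "norm1 (v $ i)" "?u' $ i" "?u $ i" "muc v B"] B ulow_pos[OF nd B]
      ulow_le_norm1[OF nd B] linA_simplexes_bounds[OF nd] xy muc_le[of v B i] by (auto simp: less_imp_le)
  then show ?thesis
    by (simp add: Fobj_def htil_def inner_gradF linA_def inner_diff_right norm_power2_vec
        sum_distrib_left flip: sum.distrib sum_subtractf right_diff_distrib) (rule sum_mono)
qed

lemma continuous_on_Fobj:
  assumes "nondegenerate v" "\<forall>i. 0 < B $ i"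
  shows "continuous_on S (Fobj v B)"
  using Fobj_has_derivative[OF assms] has_derivative_continuous
  by (metis continuous_at_imp_continuous_on)

lemma hoffman_bound:
  fixes A :: "'a::euclidean_space \<Rightarrow> 'b::euclidean_space"
  assumes K: "\<And>z x. X \<inter> {x. A x = z} \<noteq> {} \<Longrightarrow> x \<in> X \<Longrightarrow>
      norm (x - closest_point (X \<inter> {x. A x = z}) x) \<le> K * norm (A x - z)"
    and ne: "X \<inter> {x. A x = z} \<noteq> {}" and x: "x \<in> X"
  shows "norm (x - closest_point (X \<inter> {x. A x = z}) x) \<le> hoffman X A * norm (A x - z)"
proof -
  define Hs where "Hs = {H. 0 < H \<and> (\<forall>z. X \<inter> {x. A x = z} \<noteq> {} \<longrightarrow>
      (\<forall>x\<in>X. norm (x - closest_point (X \<inter> {x. A x = z}) x) \<le> H * norm (A x - z)))}"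
  let ?D = "norm (x - closest_point (X \<inter> {x. A x = z}) x)" and ?r = "norm (A x - z)"
  have "\<bar>K\<bar> + 1 \<in> Hs" unfolding Hs_def
  proof (intro CollectI conjI allI impI ballI)
    fix z' x' assume "X \<inter> {x. A x = z'} \<noteq> {}" "x' \<in> X"
    then have "norm (x' - closest_point (X \<inter> {x. A x = z'}) x') \<le> K * norm (A x' - z')" by (rule K)
    also have "\<dots> \<le> (\<bar>K\<bar> + 1) * norm (A x' - z')" by (intro mult_right_mono) auto
    finally show "norm (x' - closest_point (X \<inter> {x. A x = z'}) x') \<le> (\<bar>K\<bar> + 1) * norm (A x' - z')" .
  qed simp
  then have Hs: "Hs \<noteq> {}" by blast
  have D_le: "?D \<le> H * ?r" if "H \<in> Hs" for H using that ne x unfolding Hs_def by blast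
  have "?D \<le> Inf Hs * ?r"
  proof (cases "?r = 0")
    case True
    then show ?thesis using D_le[OF \<open>\<bar>K\<bar> + 1 \<in> Hs\<close>] by simp
  next
    case False
    then have "0 < ?r" by simp
    moreover have "?D / ?r \<le> Inf Hs"
      using D_le \<open>0 < ?r\<close> by (intro cInf_greatest[OF Hs]) (simp add: divide_le_eq)
    ultimately show ?thesis by (simp add: divide_le_eq)
  qed
  then show ?thesis by (simp add: hoffman_def Hs_def)
qed

lemma closed_simplexes_fibre: "closed (simplexes \<inter> {x. linA v x = z})"
  by (intro closed_Int closed_simplexes closed_Collect_eq
      linear_continuous_on[OF linear_linA[THEN linear_conv_bounded_linear[THEN iffD1]]] continuous_on_const)

definition colsum :: "real^'m^'n \<Rightarrow> real^'m" where
  "colsum d = (\<chi> j. \<Sum>i\<in>UNIV. d $ i $ j)"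

text \<open>Apply conformal preimages to d \<mapsto> (A d, column sums of d): for y0 in the fibre, a preimage
  d' of y0 - x conformal to it keeps x + d' nonnegative, so x + d' lies in the fibre as well.\<close>
lemma simplexes_hoffman_bound:
  fixes v :: "real^'m^'n"
  obtains K where "\<And>z x. simplexes \<inter> {x. linA v x = z} \<noteq> {} \<Longrightarrow> x \<in> simplexes \<Longrightarrow>
    norm (x - closest_point (simplexes \<inter> {x. linA v x = z}) x) \<le> K * norm (linA v x - z)"
proof -
  define f where "f d = (linA v d, colsum d)" for d :: "real^'m^'n"
  have "linear f" unfolding f_def
    by (rule linearI) (auto simp: linA_def colsum_def vec_eq_iff inner_add_right sum.distrib sum_distrib_left)
  then obtain K where K: "\<And>d. \<exists>d'. conforms d' d \<and> f d' = f d \<and> norm d' \<le> K * norm (f d)"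
    using conformal_preimage_bound by blast
  have "norm (x - closest_point (simplexes \<inter> {x. linA v x = z}) x) \<le> K * norm (linA v x - z)"
    if ne: "simplexes \<inter> {x. linA v x = z} \<noteq> {}" and x: "x \<in> simplexes" for z x
  proof -
    let ?S = "simplexes \<inter> {x. linA v x = z}"
    obtain y0 where y0: "y0 \<in> simplexes" "linA v y0 = z" using ne by blast
    define d where "d = y0 - x"
    have fd: "f d = (z - linA v x, 0)"
      using y0 x by (simp add: f_def d_def linA_diff colsum_def vec_eq_iff simplexes_def sum_subtractf)
    obtain d' where d': "conforms d' d" "f d' = f d" "norm d' \<le> K * norm (f d)" using K by blast
    have "x + d' \<in> ?S"
    proof -
      have "min 0 (y0 $ i $ j - x $ i $ j) \<le> d' $ i $ j" for i j
        using d'(1) unfolding conforms_def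
        by (auto simp: d_def inner_axis dest!: bspec[of _ _ "axis i (axis j 1)"])
      then have "0 \<le> (x + d') $ i $ j" for i j
        using simplexes_entry_bounds(1)[OF x, of i j] simplexes_entry_bounds(1)[OF y0(1), of i j]
        by (smt (verit) vector_add_component)
      moreover have "(\<Sum>i\<in>UNIV. (x + d') $ i $ j) = 1" for j
        using d'(2) fd x by (simp add: f_def colsum_def vec_eq_iff simplexes_def sum.distrib)
      moreover have "linA v (x + d') = z"
        using d'(2) fd by (simp add: f_def linA_def inner_add_right vec_eq_iff)
      ultimately show ?thesis by (simp add: simplexes_def)
    qed
    moreover have "closed ?S" by (rule closed_simplexes_fibre)
    ultimately have "norm (x - closest_point ?S x) \<le> norm d'"
      using closest_point_le[of ?S "x + d'" x] by (simp add: dist_norm)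
    also have "\<dots> \<le> K * norm (linA v x - z)" using d'(3) fd by (simp add: norm_Pair norm_minus_commute)
    finally show ?thesis .
  qed
  then show ?thesis using that by blast
qed

lemma Fobj_projected_gradient_step:
  fixes v :: "real^'m^'n"
  assumes nd: "nondegenerate v" and B: "\<forall>i. 0 < B $ i" and x: "x \<in> simplexes" and xbar: "xbar \<in> simplexes"
  shows "Fobj v B (closest_point simplexes (x - (1 / (Lc v B * (onorm (linA v))^2)) *\<^sub>R grad (Fobj v B) x))
      - Fobj v B xbar
    \<le> (1 - muc v B / max (muc v B) (Lc v B * (hoffman simplexes (linA v))^2 * (onorm (linA v))^2))
      * (Fobj v B x - Fobj v B xbar)"
proof -
  let ?S = "simplexes \<inter> {y. linA v y = linA v xbar}"
  let ?H = "hoffman simplexes (linA v)" and ?LF = "Lc v B * (onorm (linA v))^2"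
  define z where "z = closest_point ?S x"
  obtain K where K: "\<And>z x. simplexes \<inter> {x. linA v x = z} \<noteq> {} \<Longrightarrow> x \<in> simplexes \<Longrightarrow>
      norm (x - closest_point (simplexes \<inter> {x. linA v x = z}) x) \<le> K * norm (linA v x - z)"
    using simplexes_hoffman_bound by blast
  have "?S \<noteq> {}" using xbar by blast
  moreover have "closed ?S" by (rule closed_simplexes_fibre)
  ultimately have z: "z \<in> simplexes" "linA v z = linA v xbar"
    using closest_point_in_set unfolding z_def by blast+
  have "norm (x - z) \<le> ?H * norm (linA v x - linA v xbar)"
    unfolding z_def by (rule hoffman_bound[OF K \<open>?S \<noteq> {}\<close> x])
  then have hoffman_z: "norm (z - x) \<le> ?H * norm (linA v z - linA v x)"
    using z(2) by (simp add: norm_minus_commute)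
  have "Fobj v B (closest_point simplexes (x - (1 / ?LF) *\<^sub>R gradF v B x)) - Fobj v B z
      \<le> (1 - muc v B / max (muc v B) (?LF * ?H^2)) * (Fobj v B x - Fobj v B z)"
  proof (rule projected_gradient_contraction[OF convex_simplexes closed_simplexes simplexes_nonempty x
        _ muc_pos[OF nd B] _ _ z(1) hoffman_z])
    show "0 < ?LF" using Lc_pos[OF nd B] onorm_linA_pos[OF nd] by simp
    show "Fobj v B y \<le> Fobj v B x + gradF v B x \<bullet> (y - x) + ?LF / 2 * (norm (y - x))^2" for y
      using Fobj_le_quadratic_model[OF nd B, of y x] by (simp add: algebra_simps)
    show "Fobj v B x + gradF v B x \<bullet> (y - x) + muc v B / 2 * (norm (linA v y - linA v x))^2 \<le> Fobj v B y"
      if "y \<in> simplexes" for y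
      by (rule Fobj_ge_quadratic_model[OF nd B x that])
  qed
  moreover have "Fobj v B z = Fobj v B xbar" using z(2) by (simp add: Fobj_def)
  moreover have "?LF * ?H^2 = Lc v B * ?H^2 * (onorm (linA v))^2" by (simp add: ac_simps)
  ultimately show ?thesis using grad_eqI[OF Fobj_has_derivative[OF nd B]] by simp
qed

theorem theorem5:
  fixes v :: "real^'m^'n" and B :: "real^'n" and x :: "nat \<Rightarrow> real^'m^'n"
  assumes "nondegenerate v"
    and "\<forall>i. B $ i > 0"
    and "x 0 \<in> simplexes"
    and "\<forall>t. x (Suc t) = closest_point simplexes
           (x t - (1 / (Lc v B * (onorm (linA v))^2)) *\<^sub>R grad (Fobj v B) (x t))"
  shows "Fobj v B (x t) - Inf (Fobj v B ` simplexes)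
     \<le> (1 - muc v B / max (muc v B) (Lc v B * (hoffman simplexes (linA v))^2 * (onorm (linA v))^2)) ^ t
        * (Fobj v B (x 0) - Inf (Fobj v B ` simplexes))"
proof -
  let ?F = "Fobj v B"
  let ?rho = "1 - muc v B / max (muc v B) (Lc v B * (hoffman simplexes (linA v))^2 * (onorm (linA v))^2)"
  obtain xbar where xbar: "xbar \<in> simplexes" "\<forall>y\<in>simplexes. ?F xbar \<le> ?F y"
    using continuous_attains_inf[OF compact_simplexes simplexes_nonempty continuous_on_Fobj[OF assms(1,2)]]
    by blast
  have inf: "Inf (?F ` simplexes) = ?F xbar" using xbar by (intro cInf_eq_minimum) auto
  have rho: "0 \<le> ?rho" using muc_pos[OF assms(1,2)] by (simp add: divide_le_eq)
  have x_in: "x t \<in> simplexes" for t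
    using assms(3,4) closest_point_in_set[OF closed_simplexes simplexes_nonempty] by (induction t) auto
  have "?F (x t) - ?F xbar \<le> ?rho ^ t * (?F (x 0) - ?F xbar)"
  proof (induction t)
    case (Suc t)
    have "?F (x (Suc t)) - ?F xbar \<le> ?rho * (?F (x t) - ?F xbar)"
      using Fobj_projected_gradient_step[OF assms(1,2) x_in xbar(1)] assms(4) by simp
    also have "\<dots> \<le> ?rho * (?rho ^ t * (?F (x 0) - ?F xbar))" using Suc rho by (rule mult_left_mono)
    finally show ?case by simp
  qed simp
  then show ?thesis unfolding inf .
qed

end
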